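(* Let $R$ be a connected quotient root system with base $S$, let $\Phi\subseteq R^+$, and let $\Phi=\inf_I^S(\Psi,X)$ be the canonical form of $\Phi$. Then: (i) $\Psi$ is primitive if and only if $\operatorname{supp} \Phi = \operatorname{supp} \Phi^c = S$; (ii) $\Psi = \emptyset$ if and only if $\operatorname{supp} \Phi$ is a proper subset of $S$ and $\operatorname{supp} \Phi^c = S$; and $\Psi = (R/I)^+$ if and only if $\operatorname{supp} \Phi^c$ is a proper subset of $S$ and $\operatorname{supp} \Phi = S$.
   Context: Quotient root systems (QRS): a QRS $R$ is the set of non-zero images of a root system $\Delta$ (with base $\Sigma$) under the orthogonal projection of its ambient Euclidean space onto $(\mathrm{span}\,J)^\perp$ for some $J\subsetneq\Sigma$, with the induced inner product; its base $S$ consists of the images of $\Sigma\setminus J$, and every root is an integer combination of $S$ with all coefficients $\ge0$ (positive roots, $R^+$) or all $\le0$. $R$ is connected if the graph on $S$ with an edge between $\theta,\theta'$ iff $\langle\theta,\theta'\rangle<0$ is connected. $\Phi^c=R^+\setminus\Phi$. The support of a root is the set of elements of $S$ with non-zero coefficient; the support of a set is the union of supports. For $K\subseteq S$: $R_K=R\cap\mathrm{span}\,K$ (a QRS with base $K$), $R_K^+=R_K\cap R^+$; $\pi_K$ is orthogonal projection onto $(\mathrm{span}\,K)^\perp$, $R/K$ the set of non-zero elements of $\pi_K(R)$ (a QRS with base the images of $S\setminus K$), $(R/K)^+=\pi_K(R^+)\setminus\{0\}$. Inflation: $\inf_K^S(\Psi,X):=\{\alpha\in R^+:\pi_K(\alpha)\in\Psi\}\cup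 X$ for $\Psi\subseteq(R/K)^+$, $X\subseteq R_K^+$. A subset $\Phi\subseteq R^+$ is primitive if $\Phi\neq\emptyset$, $\Phi\ne R^+$ and $\Phi=\inf_K^S(\Psi,X)$ implies $K\in\{\emptyset,S\}$ (same notion inside any QRS, e.g. $R/I$). Canonical form: for connected $R$, the unique expression $\Phi=\inf_I^S(\Psi,X)$ with $I\subsetneq S$ such that either $\Psi$ is primitive, or $\Psi\in\{\emptyset,(R/I)^+\}$ and $I$ is smallest under inclusion with this property. *)

theory Defs
  imports "HOL-Analysis.Analysis"
begin

definition root_system :: "'a::euclidean_space set \<Rightarrow> bool" where
  "root_system D \<longleftrightarrow> finite D \<and> 0 \<notin> D \<and>
     (\<forall>\<alpha>\<in>D. \<forall>\<beta>\<in>D. \<beta> - (2 * (\<beta> \<bullet> \<alpha>) / (\<alpha> \<bullet> \<alpha>)) *\<^sub>R \<alpha> \<in> D \<and>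
                      2 * (\<beta> \<bullet> \<alpha>) / (\<alpha> \<bullet> \<alpha>) \<in> \<int>) \<and>
     (\<forall>\<alpha>\<in>D. \<forall>c::real. c *\<^sub>R \<alpha> \<in> D \<longrightarrow> c = 1 \<or> c = -1)"

definition root_base :: "'a::euclidean_space set \<Rightarrow> 'a set \<Rightarrow> bool" where
  "root_base D B \<longleftrightarrow> B \<subseteq> D \<and> independent B \<and>
     (\<forall>\<alpha>\<in>D. \<exists>c::'a \<Rightarrow> int. \<alpha> = (\<Sum>\<sigma>\<in>B. of_int (c \<sigma>) *\<^sub>R \<sigma>) \<and>
                 ((\<forall>\<sigma>\<in>B. c \<sigma> \<ge> 0) \<or> (\<forall>\<sigma>\<in>B. c \<sigma> \<le> 0)))"

definition perp_proj :: "'a::euclidean_space set \<Rightarrow> 'a \<Rightarrow> 'a" where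
  "perp_proj K v = (THE w. v - w \<in> span K \<and> (\<forall>k\<in>K. orthogonal w k))"

definition is_QRS :: "'a::euclidean_space set \<Rightarrow> 'a set \<Rightarrow> bool" where
  "is_QRS R S \<longleftrightarrow> (\<exists>D B J. root_system D \<and> root_base D B \<and> J \<subset> B \<and>
      R = perp_proj J ` D - {0} \<and> S = perp_proj J ` (B - J))"

definition pos_roots :: "'a::euclidean_space set \<Rightarrow> 'a set \<Rightarrow> 'a set" where
  "pos_roots R S = {\<alpha>\<in>R. \<exists>c::'a \<Rightarrow> int. \<alpha> = (\<Sum>\<theta>\<in>S. of_int (c \<theta>) *\<^sub>R \<theta>) \<and> (\<forall>\<theta>\<in>S. c \<theta> \<ge> 0)}"

definition connected_base :: "'a::euclidean_space set \<Rightarrow> bool" where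
  "connected_base S \<longleftrightarrow>
     (\<forall>\<theta>\<in>S. \<forall>\<theta>'\<in>S. (\<lambda>x y. x \<in> S \<and> y \<in> S \<and> x \<bullet> y < 0)\<^sup>*\<^sup>* \<theta> \<theta>')"

definition supp_root :: "'a::euclidean_space set \<Rightarrow> 'a \<Rightarrow> 'a set" where
  "supp_root S \<alpha> = {\<theta>\<in>S. representation S \<alpha> \<theta> \<noteq> 0}"

definition supp_set :: "'a::euclidean_space set \<Rightarrow> 'a set \<Rightarrow> 'a set" where
  "supp_set S A = (\<Union>\<alpha>\<in>A. supp_root S \<alpha>)"

definition quot_roots :: "'a::euclidean_space set \<Rightarrow> 'a set \<Rightarrow> 'a set" where
  "quot_roots R K = perp_proj K ` R - {0}"

definition quot_pos :: "'a::euclidean_space set \<Rightarrow> 'a set \<Rightarrow> 'a set \<Rightarrow> 'a set" where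
  "quot_pos R S K = perp_proj K ` pos_roots R S - {0}"

definition quot_base :: "'a::euclidean_space set \<Rightarrow> 'a set \<Rightarrow> 'a set" where
  "quot_base S K = perp_proj K ` (S - K)"

definition sub_pos :: "'a::euclidean_space set \<Rightarrow> 'a set \<Rightarrow> 'a set \<Rightarrow> 'a set" where
  "sub_pos R S K = pos_roots R S \<inter> span K"

definition inflation :: "'a::euclidean_space set \<Rightarrow> 'a set \<Rightarrow> 'a set \<Rightarrow> 'a set \<Rightarrow> 'a set \<Rightarrow> 'a set" where
  "inflation R S K \<Psi> X = {\<alpha>\<in>pos_roots R S. perp_proj K \<alpha> \<in> \<Psi>} \<union> X"

definition primitive :: "'a::euclidean_space set \<Rightarrow> 'a set \<Rightarrow> 'a set \<Rightarrow> bool" where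
  "primitive R S \<Phi> \<longleftrightarrow> \<Phi> \<noteq> {} \<and> \<Phi> \<noteq> pos_roots R S \<and>
     (\<forall>K \<Psi> X. K \<subseteq> S \<and> \<Psi> \<subseteq> quot_pos R S K \<and> X \<subseteq> sub_pos R S K \<and>
        \<Phi> = inflation R S K \<Psi> X \<longrightarrow> K = {} \<or> K = S)"

definition canonical_form ::
  "'a::euclidean_space set \<Rightarrow> 'a set \<Rightarrow> 'a set \<Rightarrow> 'a set \<Rightarrow> 'a set \<Rightarrow> 'a set \<Rightarrow> bool" where
  "canonical_form R S \<Phi> I \<Psi> X \<longleftrightarrow>
     I \<subset> S \<and> \<Psi> \<subseteq> quot_pos R S I \<and> X \<subseteq> sub_pos R S I \<and> \<Phi> = inflation R S I \<Psi> X \<and>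
     (primitive (quot_roots R I) (quot_base S I) \<Psi> \<or>
      ((\<Psi> = {} \<or> \<Psi> = quot_pos R S I) \<and>
       (\<forall>I' \<Psi>' X'. I' \<subset> S \<and> (\<Psi>' = {} \<or> \<Psi>' = quot_pos R S I') \<and> X' \<subseteq> sub_pos R S I' \<and>
          \<Phi> = inflation R S I' \<Psi>' X' \<longrightarrow> I \<subseteq> I')))"

end

theory Submission
  imports Defs
begin

text \<open>
  Write \<open>S'\<close> for the base of \<open>R/I\<close>. The support of \<open>\<Phi> = inf_I^S(\<Psi>,X)\<close> is all of \<open>S\<close>
  exactly when \<open>\<Psi>\<close> has full support \<open>S'\<close>, and the same holds for \<open>\<Phi>^c\<close> and
  \<open>(R/I)^+ - \<Psi>\<close>, because the complement of an inflation is the inflation of the complements.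
  A primitive \<open>\<Psi>\<close> and its complement both have full support, since otherwise the support
  would exhibit \<open>\<Psi>\<close> as a non-trivial inflation; \<open>\<Psi> = {}\<close> and \<open>\<Psi> = (R/I)^+\<close> give the other
  two combinations.

  That full support of \<open>\<Psi>\<close> forces full support of \<open>\<Phi>\<close> is the substantial step: a simple
  root \<open>\<theta> \<in> I\<close> has to occur in some root of \<open>R\<close> lying over \<open>\<Psi>\<close>. This is done in the root
  system \<open>\<Delta>\<close> of which \<open>R\<close> is a quotient: by connectedness, the Dynkin graph of \<open>\<Delta>\<close> contains
  a path from a simple root outside \<open>I\<close> to \<open>\<theta>\<close>, and reflecting along its last stretch inside
  \<open>I\<close> only adds simple roots which vanish in \<open>R/I\<close>.
\<close>

section \<open>Orthogonal projections\<close>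

lemma orthogonal_component_unique:
  fixes K :: "'a::euclidean_space set"
  assumes "v - w1 \<in> span K" "\<forall>k\<in>K. orthogonal w1 k"
    and "v - w2 \<in> span K" "\<forall>k\<in>K. orthogonal w2 k"
  shows "w1 = w2"
proof -
  have "w2 - w1 \<in> span K"
    using span_diff[OF assms(1,3)] by (simp add: algebra_simps)
  moreover have "orthogonal (w2 - w1) k" if "k \<in> K" for k
    using assms(2,4) that by (simp add: orthogonal_clauses)
  ultimately have "orthogonal (w2 - w1) (w2 - w1)"
    by (blast intro: orthogonal_to_span)
  then show ?thesis by (simp add: orthogonal_def)
qed

lemma perp_proj_spec:
  fixes K :: "'a::euclidean_space set"
  shows "v - perp_proj K v \<in> span K \<and> (\<forall>k\<in>K. orthogonal (perp_proj K v) k)"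
proof -
  obtain y z where "y \<in> span K" "\<And>w. w \<in> span K \<Longrightarrow> orthogonal z w" "v = y + z"
    using orthogonal_subspace_decomp_exists by blast
  then have "\<exists>w. v - w \<in> span K \<and> (\<forall>k\<in>K. orthogonal w k)"
    by (intro exI[of _ z]) (auto intro: span_base)
  then have "\<exists>!w. v - w \<in> span K \<and> (\<forall>k\<in>K. orthogonal w k)"
    using orthogonal_component_unique by blast
  then show ?thesis
    unfolding perp_proj_def by (rule theI')
qed

lemma perp_proj_diff_in_span: "v - perp_proj K v \<in> span K"
  using perp_proj_spec by blast

lemma perp_proj_orthogonal_span:
  assumes "u \<in> span K"
  shows "perp_proj K v \<bullet> u = 0"
  using orthogonal_to_span[OF assms] perp_proj_spec[of v K] unfolding orthogonal_def by blast

lemma perp_proj_unique: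
  fixes K :: "'a::euclidean_space set"
  assumes "v - w \<in> span K" and "\<forall>k\<in>K. orthogonal w k"
  shows "perp_proj K v = w"
  using orthogonal_component_unique perp_proj_spec assms by blast

lemma linear_perp_proj: "linear (perp_proj K)"
proof (rule linearI)
  fix a b :: 'a and c :: real
  show "perp_proj K (a + b) = perp_proj K a + perp_proj K b"
  proof (rule perp_proj_unique)
    show "a + b - (perp_proj K a + perp_proj K b) \<in> span K"
      using span_add[OF perp_proj_diff_in_span[of a K] perp_proj_diff_in_span[of b K]]
      by (simp add: algebra_simps)
    show "\<forall>k\<in>K. orthogonal (perp_proj K a + perp_proj K b) k"
      using perp_proj_spec[of a K] perp_proj_spec[of b K] by (simp add: orthogonal_clauses)
  qed
  show "perp_proj K (c *\<^sub>R a) = c *\<^sub>R perp_proj K a"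
  proof (rule perp_proj_unique)
    show "c *\<^sub>R a - c *\<^sub>R perp_proj K a \<in> span K"
      using span_mul[OF perp_proj_diff_in_span[of a K], of c] by (simp add: algebra_simps)
    show "\<forall>k\<in>K. orthogonal (c *\<^sub>R perp_proj K a) k"
      using perp_proj_spec[of a K] by (simp add: orthogonal_clauses)
  qed
qed

lemma perp_proj_eq_0_iff: "perp_proj K v = 0 \<longleftrightarrow> v \<in> span K"
proof
  assume "perp_proj K v = 0"
  then show "v \<in> span K" using perp_proj_diff_in_span[of v K] by simp
next
  assume "v \<in> span K"
  then show "perp_proj K v = 0" by (intro perp_proj_unique) (auto simp: orthogonal_def)
qed

lemma perp_proj_eq_perp_proj_subset:
  fixes K :: "'a::euclidean_space set"
  assumes "C \<subseteq> K"
    and orth_C: "\<And>c k. c \<in> C \<Longrightarrow> k \<in> K - C \<Longrightarrow> c \<bullet> k = 0"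
    and orth_v: "\<And>k. k \<in> K - C \<Longrightarrow> v \<bullet> k = 0"
  shows "perp_proj K v = perp_proj C v"
proof (rule perp_proj_unique)
  show "v - perp_proj C v \<in> span K"
    using perp_proj_diff_in_span span_mono[OF assms(1)] by blast
  show "\<forall>k\<in>K. orthogonal (perp_proj C v) k"
  proof
    fix k assume k: "k \<in> K"
    show "orthogonal (perp_proj C v) k"
    proof (cases "k \<in> C")
      case True
      then show ?thesis using perp_proj_spec by blast
    next
      case False
      then have "orthogonal k (v - perp_proj C v)"
        using orthogonal_to_span[OF perp_proj_diff_in_span] orth_C k
        by (metis DiffI inner_commute orthogonal_def)
      then show ?thesis
        using orth_v[of k] k False by (simp add: orthogonal_def inner_diff_right inner_commute)
    qed
  qed
qed

lemma representation_lincomb: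
  fixes S :: "'a::euclidean_space set"
  assumes ind: "independent S" and s: "s \<in> S"
  shows "representation S (\<Sum>t\<in>S. c t *\<^sub>R t) s = c s"
proof -
  let ?x = "\<Sum>t\<in>S. c t *\<^sub>R t"
  have fin: "finite S" using independent_bound[OF ind] by auto
  have "?x \<in> span S" by (intro span_sum span_mul span_base)
  then have "?x = (\<Sum>t\<in>S. representation S ?x t *\<^sub>R t)"
    using sum_representation_eq[OF ind _ fin] by simp
  then have "(\<Sum>t\<in>S. (representation S ?x t - c t) *\<^sub>R t) = 0"
    by (simp add: scaleR_diff_left sum_subtractf)
  then show ?thesis using ind s fin unfolding independent_explicit by auto
qed

lemma representation_eq_0_outside_span:
  fixes S :: "'a::euclidean_space set"
  assumes "independent S" and "I \<subseteq> S" and "x \<in> span I" and "s \<notin> I"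
  shows "representation S x s = 0"
  using representation_extend[OF assms(1,3,2)] representation_ne_zero[of I x s] assms(4) by auto

lemma supp_root_subset:
  fixes S :: "'a::euclidean_space set"
  assumes "independent S" and "I \<subseteq> S" and "x \<in> span I"
  shows "supp_root S x \<subseteq> I"
  using representation_eq_0_outside_span[OF assms] unfolding supp_root_def by auto

lemma supp_root_zero: "supp_root S 0 = {}"
  by (simp add: supp_root_def representation_zero)

lemma in_span_supp_root:
  fixes S :: "'a::euclidean_space set"
  assumes ind: "independent S" and "x \<in> span S"
  shows "x \<in> span (supp_root S x)"
proof -
  have supp: "{b. representation S x b \<noteq> 0} = supp_root S x"
    unfolding supp_root_def using representation_ne_zero by blast
  have "x = (\<Sum>b | representation S x b \<noteq> 0. representation S x b *\<^sub>R b)"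
    using sum_nonzero_representation_eq[OF assms] by simp
  also have "\<dots> \<in> span (supp_root S x)"
    unfolding supp by (intro span_sum span_mul span_base) auto
  finally show ?thesis .
qed

lemma supp_set_subset: "supp_set S A \<subseteq> S"
  unfolding supp_set_def supp_root_def by auto

lemma supp_set_empty [simp]: "supp_set S {} = {}"
  unfolding supp_set_def by simp

lemma subset_span_supp_set:
  fixes S :: "'a::euclidean_space set"
  assumes "independent S" and "A \<subseteq> span S"
  shows "A \<subseteq> span (supp_set S A)"
proof
  fix x assume "x \<in> A"
  then have "x \<in> span (supp_root S x)" "supp_root S x \<subseteq> supp_set S A"
    using in_span_supp_root[OF assms(1)] assms(2) unfolding supp_set_def by auto
  then show "x \<in> span (supp_set S A)" using span_mono by blast
qed

lemma supp_set_eq_base: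
  fixes S :: "'a::euclidean_space set"
  assumes "independent S" and "S \<subseteq> A"
  shows "supp_set S A = S"
proof (rule antisym[OF supp_set_subset subsetI])
  fix s assume "s \<in> S"
  then have "s \<in> supp_root S s"
    using representation_basis[OF assms(1)] unfolding supp_root_def by simp
  then show "s \<in> supp_set S A"
    using \<open>s \<in> S\<close> assms(2) unfolding supp_set_def by blast
qed

lemma span_inter_span_diff_eq_0:
  fixes B :: "'a::euclidean_space set"
  assumes ind: "independent B" and "J \<subseteq> B" and "d \<in> span J" and "d \<in> span (B - J)"
  shows "d = 0"
proof -
  have fin: "finite B" using independent_bound[OF ind] by auto
  have d: "d \<in> span B" using assms(2,3) span_mono by blast
  have "\<forall>b\<in>B. representation B d b = 0"
    using representation_eq_0_outside_span[OF ind _ assms(3)]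
      representation_eq_0_outside_span[OF ind _ assms(4)] assms(2) by blast
  then show ?thesis using sum_representation_eq[OF ind d fin] by simp
qed

lemma inj_on_perp_proj_span:
  fixes B :: "'a::euclidean_space set"
  assumes "independent B" and "J \<subseteq> B"
  shows "inj_on (perp_proj J) (span (B - J))"
proof (rule inj_onI)
  fix u w assume u: "u \<in> span (B - J)" and w: "w \<in> span (B - J)"
    and "perp_proj J u = perp_proj J w"
  then have "perp_proj J (u - w) = 0"
    using linear_diff[OF linear_perp_proj, of J u w] by simp
  then have "u - w \<in> span J" by (simp add: perp_proj_eq_0_iff)
  moreover have "u - w \<in> span (B - J)" using u w span_diff by blast
  ultimately have "u - w = 0" using span_inter_span_diff_eq_0[OF assms] by blast
  then show "u = w" by simp
qed

lemma inj_on_perp_proj: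
  fixes B :: "'a::euclidean_space set"
  assumes "independent B" and "J \<subseteq> B"
  shows "inj_on (perp_proj J) (B - J)"
  using inj_on_subset[OF inj_on_perp_proj_span[OF assms] span_superset] .

lemma independent_quot_base:
  fixes B :: "'a::euclidean_space set"
  assumes "independent B" and "J \<subseteq> B"
  shows "independent (quot_base B J)"
  unfolding quot_base_def
  using linear_independent_injective_image[OF linear_perp_proj _ inj_on_perp_proj_span[OF assms]]
    assms(1) dependent_mono[of "B - J" B] by auto

lemma base_notin_span:
  fixes B :: "'a::euclidean_space set"
  assumes "independent B" and "J \<subseteq> B" and "b \<in> B - J"
  shows "b \<notin> span J"
proof
  assume "b \<in> span J"
  then have "b \<in> span (B - {b})" using assms(2,3) span_mono[of J "B - {b}"] by blast
  then show False using assms(1,3) unfolding dependent_def by blast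
qed

lemma perp_proj_lincomb:
  fixes B :: "'a::euclidean_space set"
  assumes ind: "independent B" and J: "J \<subseteq> B"
  shows "perp_proj J (\<Sum>b\<in>B. c b *\<^sub>R b) =
    (\<Sum>s\<in>quot_base B J. c (the_inv_into (B - J) (perp_proj J) s) *\<^sub>R s)"
proof -
  let ?P = "perp_proj J"
  have fin: "finite B" using independent_bound[OF ind] by auto
  have "?P (\<Sum>b\<in>B. c b *\<^sub>R b) = (\<Sum>b\<in>B. c b *\<^sub>R ?P b)"
    by (simp add: linear_sum[OF linear_perp_proj] linear_scale[OF linear_perp_proj])
  also have "\<dots> = (\<Sum>b\<in>B - J. c b *\<^sub>R ?P b)"
    by (rule sum.mono_neutral_right[OF fin]) (auto simp: perp_proj_eq_0_iff span_base)
  also have "\<dots> = (\<Sum>s\<in>quot_base B J. c (the_inv_into (B - J) ?P s) *\<^sub>R s)"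
    unfolding quot_base_def
    using sum.reindex[OF inj_on_perp_proj[OF ind J], of "\<lambda>s. c (the_inv_into (B - J) ?P s) *\<^sub>R s"]
      the_inv_into_f_f[OF inj_on_perp_proj[OF ind J]] by simp
  finally show ?thesis .
qed

lemma representation_perp_proj:
  fixes B :: "'a::euclidean_space set"
  assumes ind: "independent B" and J: "J \<subseteq> B" and v: "v \<in> span B" and b: "b \<in> B - J"
  shows "representation (quot_base B J) (perp_proj J v) (perp_proj J b) = representation B v b"
proof -
  let ?P = "perp_proj J" and ?inv = "the_inv_into (B - J) (perp_proj J)"
  have fin: "finite B" using independent_bound[OF ind] by auto
  have "?P v = ?P (\<Sum>b\<in>B. representation B v b *\<^sub>R b)"
    using sum_representation_eq[OF ind v fin] by simp
  also have "\<dots> = (\<Sum>s\<in>quot_base B J. representation B v (?inv s) *\<^sub>R s)"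
    by (rule perp_proj_lincomb[OF ind J])
  finally have "representation (quot_base B J) (?P v) (?P b) = representation B v (?inv (?P b))"
    using representation_lincomb[OF independent_quot_base[OF ind J]] b
    unfolding quot_base_def by simp
  then show ?thesis using the_inv_into_f_f[OF inj_on_perp_proj[OF ind J] b] by simp
qed

lemma perp_proj_in_supp_root_iff:
  fixes S :: "'a::euclidean_space set"
  assumes "independent S" and "I \<subseteq> S" and "x \<in> span S" and "\<theta> \<in> S - I"
  shows "perp_proj I \<theta> \<in> supp_root (quot_base S I) (perp_proj I x) \<longleftrightarrow> \<theta> \<in> supp_root S x"
  using representation_perp_proj[OF assms] assms(4) unfolding supp_root_def quot_base_def by auto

lemma pos_roots_subset: "pos_roots R S \<subseteq> R"
  unfolding pos_roots_def by auto

lemma pos_roots_subset_span: "pos_roots R S \<subseteq> span S"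
  unfolding pos_roots_def by (auto intro!: span_sum span_mul intro: span_base)

lemma representation_pos_root_nonneg:
  fixes S :: "'a::euclidean_space set"
  assumes "independent S" and "x \<in> pos_roots R S" and "s \<in> S"
  shows "0 \<le> representation S x s"
proof -
  obtain c :: "'a \<Rightarrow> int" where "x = (\<Sum>t\<in>S. of_int (c t) *\<^sub>R t)" "\<forall>t\<in>S. 0 \<le> c t"
    using assms(2) unfolding pos_roots_def by auto
  then show ?thesis using representation_lincomb[OF assms(1,3)] assms(3) by simp
qed

lemma pos_root_uminus_eq_0:
  fixes S :: "'a::euclidean_space set"
  assumes ind: "independent S" and x: "x \<in> pos_roots R S" and "- x \<in> pos_roots R S"
  shows "x = 0"
proof -
  have fin: "finite S" using independent_bound[OF ind] by auto
  have xS: "x \<in> span S" using x pos_roots_subset_span by blast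
  have "representation S x s = 0" if "s \<in> S" for s
  proof -
    have "representation S (- x) s = - representation S x s"
      using representation_neg[OF ind xS] by simp
    then show ?thesis
      using representation_pos_root_nonneg[OF ind x that]
        representation_pos_root_nonneg[OF ind assms(3) that] by linarith
  qed
  then have "\<forall>s\<in>S. representation S x s = 0" by blast
  then show ?thesis using sum_representation_eq[OF ind xS fin] by simp
qed

lemma quot_posI: "x \<in> pos_roots R S \<Longrightarrow> perp_proj I x \<noteq> 0 \<Longrightarrow> perp_proj I x \<in> quot_pos R S I"
  unfolding quot_pos_def by blast

definition roots_signed :: "'a::euclidean_space set \<Rightarrow> 'a set \<Rightarrow> bool" where
  "roots_signed R S \<longleftrightarrow> (\<forall>x\<in>R. x \<in> pos_roots R S \<or> - x \<in> pos_roots R S)"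

lemma quot_pos_subset_pos_roots:
  fixes S :: "'a::euclidean_space set"
  assumes ind: "independent S" and I: "I \<subseteq> S"
  shows "quot_pos R S I \<subseteq> pos_roots (quot_roots R I) (quot_base S I)"
proof
  fix y assume "y \<in> quot_pos R S I"
  then obtain x where x: "x \<in> pos_roots R S" "y = perp_proj I x" "y \<noteq> 0"
    unfolding quot_pos_def by auto
  obtain c :: "'a \<Rightarrow> int" where c: "x = (\<Sum>s\<in>S. of_int (c s) *\<^sub>R s)" "\<forall>s\<in>S. 0 \<le> c s"
    using x(1) unfolding pos_roots_def by auto
  let ?d = "\<lambda>t. c (the_inv_into (S - I) (perp_proj I) t)"
  have "y = (\<Sum>t\<in>quot_base S I. of_int (?d t) *\<^sub>R t)"
    using perp_proj_lincomb[OF ind I, of "\<lambda>s. of_int (c s)"] x(2) c(1) by simp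
  moreover have "\<forall>t\<in>quot_base S I. 0 \<le> ?d t"
    using c(2) the_inv_into_into[OF inj_on_perp_proj[OF ind I] _ Diff_subset]
    unfolding quot_base_def by blast
  ultimately have "\<exists>d::'a \<Rightarrow> int. y = (\<Sum>t\<in>quot_base S I. of_int (d t) *\<^sub>R t) \<and>
      (\<forall>t\<in>quot_base S I. 0 \<le> d t)"
    by (intro exI[of _ ?d] conjI)
  moreover have "y \<in> quot_roots R I"
    using x pos_roots_subset unfolding quot_roots_def by auto
  ultimately show "y \<in> pos_roots (quot_roots R I) (quot_base S I)"
    unfolding pos_roots_def by blast
qed

lemma roots_signed_quot:
  fixes S :: "'a::euclidean_space set"
  assumes "roots_signed R S" and "independent S" and "I \<subseteq> S"
  shows "roots_signed (quot_roots R I) (quot_base S I)"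
  unfolding roots_signed_def
proof
  fix y assume "y \<in> quot_roots R I"
  then obtain x where x: "x \<in> R" "y = perp_proj I x" "y \<noteq> 0"
    unfolding quot_roots_def by auto
  have "perp_proj I (- x) = - y" using x(2) linear_neg[OF linear_perp_proj] by simp
  moreover have "x \<in> pos_roots R S \<or> - x \<in> pos_roots R S"
    using assms(1) x(1) unfolding roots_signed_def by blast
  ultimately have "y \<in> quot_pos R S I \<or> - y \<in> quot_pos R S I"
    using quot_posI[of x R S I] quot_posI[of "- x" R S I] x(2,3) by auto
  then show "y \<in> pos_roots (quot_roots R I) (quot_base S I) \<or>
      - y \<in> pos_roots (quot_roots R I) (quot_base S I)"
    using quot_pos_subset_pos_roots[OF assms(2,3)] by blast
qed

lemma pos_roots_quot:
  fixes S :: "'a::euclidean_space set"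
  assumes signed: "roots_signed R S" and ind: "independent S" and I: "I \<subseteq> S"
  shows "pos_roots (quot_roots R I) (quot_base S I) = quot_pos R S I"
proof
  show "pos_roots (quot_roots R I) (quot_base S I) \<subseteq> quot_pos R S I"
  proof
    fix y assume y: "y \<in> pos_roots (quot_roots R I) (quot_base S I)"
    then obtain x where x: "x \<in> R" "y = perp_proj I x" "y \<noteq> 0"
      using pos_roots_subset unfolding quot_roots_def by blast
    show "y \<in> quot_pos R S I"
    proof (cases "x \<in> pos_roots R S")
      case True
      then show ?thesis using quot_posI[OF True, of I] x(2,3) by simp
    next
      case False
      then have "- x \<in> pos_roots R S" using signed x(1) unfolding roots_signed_def by blast
      moreover have "perp_proj I (- x) = - y" using x(2) linear_neg[OF linear_perp_proj] by simp
      ultimately have "- y \<in> quot_pos R S I"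
        using quot_posI[of "- x" R S I] x(3) by simp
      then have "- y \<in> pos_roots (quot_roots R I) (quot_base S I)"
        using quot_pos_subset_pos_roots[OF ind I] by blast
      then have "y = 0"
        using pos_root_uminus_eq_0[OF independent_quot_base[OF ind I] y] by simp
      then show ?thesis using x(3) by simp
    qed
  qed
qed (rule quot_pos_subset_pos_roots[OF ind I])

lemma quot_base_subset_quot_pos:
  fixes S :: "'a::euclidean_space set"
  assumes "independent S" and "I \<subseteq> S" and "S \<subseteq> pos_roots R S"
  shows "quot_base S I \<subseteq> quot_pos R S I"
proof
  fix y assume "y \<in> quot_base S I"
  then obtain \<theta> where \<theta>: "\<theta> \<in> S - I" "y = perp_proj I \<theta>"
    unfolding quot_base_def by auto
  then have "y \<noteq> 0"
    using base_notin_span[OF assms(1,2)] by (simp add: perp_proj_eq_0_iff)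
  then show "y \<in> quot_pos R S I"
    using quot_posI[of \<theta> R S I] \<theta> assms(3) by auto
qed

section \<open>Inflations and primitive sets\<close>

lemma pos_roots_diff_inflation:
  assumes "\<Psi> \<subseteq> quot_pos R S I" and "X \<subseteq> sub_pos R S I"
  shows "pos_roots R S - inflation R S I \<Psi> X =
    inflation R S I (quot_pos R S I - \<Psi>) (sub_pos R S I - X)"
proof (rule set_eqI)
  fix x
  show "x \<in> pos_roots R S - inflation R S I \<Psi> X \<longleftrightarrow>
    x \<in> inflation R S I (quot_pos R S I - \<Psi>) (sub_pos R S I - X)"
  proof (cases "x \<in> span I")
    case True
    then have "perp_proj I x \<notin> quot_pos R S I" by (simp add: quot_pos_def perp_proj_eq_0_iff)
    then show ?thesis using True assms by (auto simp: inflation_def sub_pos_def)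
  next
    case False
    then have "x \<in> pos_roots R S \<Longrightarrow> perp_proj I x \<in> quot_pos R S I"
      by (simp add: quot_posI perp_proj_eq_0_iff)
    then show ?thesis using False assms by (auto simp: inflation_def sub_pos_def)
  qed
qed

lemma inflation_supp_set:
  fixes S :: "'a::euclidean_space set"
  assumes "independent S" and "A \<subseteq> pos_roots R S"
  shows "A = inflation R S (supp_set S A) {} A" and "A \<subseteq> sub_pos R S (supp_set S A)"
proof -
  show "A = inflation R S (supp_set S A) {} A" unfolding inflation_def by simp
  show "A \<subseteq> sub_pos R S (supp_set S A)"
    using subset_span_supp_set[OF assms(1)] assms(2) pos_roots_subset_span
    unfolding sub_pos_def by blast
qed

lemma primitive_supp_set:
  fixes S :: "'a::euclidean_space set"
  assumes ind: "independent S" and "0 \<notin> R" and prim: "primitive R S \<Psi>"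
    and sub: "\<Psi> \<subseteq> pos_roots R S"
  shows "supp_set S \<Psi> = S" and "supp_set S (pos_roots R S - \<Psi>) = S"
proof -
  have trivial: "K = {} \<or> K = S" if "K \<subseteq> S" "\<Psi>' \<subseteq> quot_pos R S K" "X \<subseteq> sub_pos R S K"
      "\<Psi> = inflation R S K \<Psi>' X" for K \<Psi>' X
    using prim that unfolding primitive_def by blast
  have supp_nonempty: "supp_set S A \<noteq> {}" if "A \<subseteq> pos_roots R S" "A \<noteq> {}" for A
  proof
    assume "supp_set S A = {}"
    then have "A \<subseteq> span {}"
      using subset_span_supp_set[OF ind] that(1) pos_roots_subset_span by (metis subset_trans)
    then show False using that \<open>0 \<notin> R\<close> pos_roots_subset[of R S] by auto
  qed
  have proper: "\<Psi> \<noteq> {}" "pos_roots R S - \<Psi> \<noteq> {}"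
    using prim sub unfolding primitive_def by auto
  show "supp_set S \<Psi> = S"
    using trivial[OF supp_set_subset _ inflation_supp_set(2)[OF ind sub]
        inflation_supp_set(1)[OF ind sub]] supp_nonempty[OF sub proper(1)]
    by blast
  show "supp_set S (pos_roots R S - \<Psi>) = S"
  proof -
    let ?\<Psi>c = "pos_roots R S - \<Psi>"
    let ?K = "supp_set S ?\<Psi>c"
    have "\<Psi> = pos_roots R S - inflation R S ?K {} ?\<Psi>c"
      using sub inflation_supp_set(1)[OF ind, of ?\<Psi>c] by blast
    also have "\<dots> = inflation R S ?K (quot_pos R S ?K) (sub_pos R S ?K - ?\<Psi>c)"
      using pos_roots_diff_inflation[OF _ inflation_supp_set(2)[OF ind]] by simp
    finally have "?K = {} \<or> ?K = S"
      using trivial[OF supp_set_subset] by blast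
    then show ?thesis using supp_nonempty proper(2) by blast
  qed
qed

lemma exists_pos_root_supp_quot:
  fixes S :: "'a::euclidean_space set"
  assumes ind: "independent S" and I: "I \<subseteq> S" and G: "G \<subseteq> quot_pos R S I"
    and full: "supp_set (quot_base S I) G = quot_base S I" and \<theta>: "\<theta> \<in> S - I"
  shows "\<exists>x\<in>pos_roots R S. perp_proj I x \<in> G \<and> \<theta> \<in> supp_root S x"
proof -
  have "perp_proj I \<theta> \<in> quot_base S I" unfolding quot_base_def using \<theta> by auto
  then obtain g where g: "g \<in> G" "perp_proj I \<theta> \<in> supp_root (quot_base S I) g"
    using full unfolding supp_set_def by blast
  obtain x where x: "x \<in> pos_roots R S" "g = perp_proj I x"
    using g(1) G unfolding quot_pos_def by auto
  have "\<theta> \<in> supp_root S x"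
    using g(2) x perp_proj_in_supp_root_iff[OF ind I _ \<theta>] pos_roots_subset_span by blast
  then show ?thesis using x g by blast
qed

lemma supp_set_quot_full_if_inflation_full:
  fixes S :: "'a::euclidean_space set"
  assumes ind: "independent S" and I: "I \<subseteq> S" and X: "X \<subseteq> sub_pos R S I"
    and full: "supp_set S (inflation R S I \<Psi> X) = S"
  shows "supp_set (quot_base S I) \<Psi> = quot_base S I"
proof (rule antisym[OF supp_set_subset subsetI])
  fix \<theta>' assume "\<theta>' \<in> quot_base S I"
  then obtain \<theta> where \<theta>: "\<theta> \<in> S - I" "\<theta>' = perp_proj I \<theta>"
    unfolding quot_base_def by auto
  then obtain x where x: "x \<in> inflation R S I \<Psi> X" "\<theta> \<in> supp_root S x"
    using full unfolding supp_set_def by blast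
  have "x \<notin> span I" using x(2) \<theta>(1) supp_root_subset[OF ind I] by blast
  then have "x \<in> pos_roots R S" "perp_proj I x \<in> \<Psi>"
    using x(1) X unfolding inflation_def sub_pos_def by auto
  moreover have "\<theta>' \<in> supp_root (quot_base S I) (perp_proj I x)"
    using perp_proj_in_supp_root_iff[OF ind I _ \<theta>(1)] \<theta>(2) x(2) \<open>x \<in> pos_roots R S\<close>
      pos_roots_subset_span by blast
  ultimately show "\<theta>' \<in> supp_set (quot_base S I) \<Psi>"
    unfolding supp_set_def by blast
qed

section \<open>Root systems with a base\<close>

locale based_root_system =
  fixes D B :: "'a::euclidean_space set"
  assumes root_system: "root_system D" and root_base: "root_base D B"
begin

lemma independent_base: "independent B"
  using root_base unfolding root_base_def by blast

lemma finite_base: "finite B"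
  using independent_bound[OF independent_base] by blast

lemma base_subset_roots: "B \<subseteq> D"
  using root_base unfolding root_base_def by blast

lemma reflection_in_roots:
  "\<alpha> \<in> D \<Longrightarrow> \<beta> \<in> D \<Longrightarrow> \<beta> - (2 * (\<beta> \<bullet> \<alpha>) / (\<alpha> \<bullet> \<alpha>)) *\<^sub>R \<alpha> \<in> D"
  using root_system unfolding root_system_def by blast

lemma nonzero_root: "\<alpha> \<in> D \<Longrightarrow> \<alpha> \<noteq> 0"
  using root_system unfolding root_system_def by blast

lemma uminus_root:
  assumes "\<alpha> \<in> D"
  shows "- \<alpha> \<in> D"
proof -
  have "\<alpha> \<bullet> \<alpha> \<noteq> 0" using nonzero_root[OF assms] by simp
  then have "\<alpha> - (2 * (\<alpha> \<bullet> \<alpha>) / (\<alpha> \<bullet> \<alpha>)) *\<^sub>R \<alpha> = - \<alpha>"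
    by (simp add: scaleR_2)
  then show ?thesis using reflection_in_roots[OF assms assms] by simp
qed

lemma root_in_span: "\<alpha> \<in> D \<Longrightarrow> \<alpha> \<in> span B"
  using root_base unfolding root_base_def by (auto intro!: span_sum span_mul intro: span_base)

lemma roots_signed_base: "roots_signed D B"
  unfolding roots_signed_def
proof
  fix \<alpha> assume \<alpha>: "\<alpha> \<in> D"
  then obtain c :: "'a \<Rightarrow> int" where c: "\<alpha> = (\<Sum>b\<in>B. of_int (c b) *\<^sub>R b)"
    "(\<forall>b\<in>B. 0 \<le> c b) \<or> (\<forall>b\<in>B. c b \<le> 0)"
    using root_base unfolding root_base_def by blast
  show "\<alpha> \<in> pos_roots D B \<or> - \<alpha> \<in> pos_roots D B"
  proof (cases "\<forall>b\<in>B. 0 \<le> c b")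
    case True
    then show ?thesis using \<alpha> c(1) unfolding pos_roots_def by blast
  next
    case False
    have "- \<alpha> = (\<Sum>b\<in>B. of_int (- c b) *\<^sub>R b)"
      unfolding c(1) by (simp add: sum_negf)
    moreover have "\<forall>b\<in>B. 0 \<le> - c b" using False c(2) by auto
    ultimately have "- \<alpha> \<in> pos_roots D B"
      using uminus_root[OF \<alpha>] unfolding pos_roots_def
      by (intro CollectI conjI exI[of _ "\<lambda>b. - c b"])
    then show ?thesis ..
  qed
qed

lemma pos_root_of_coeff_pos:
  assumes "\<alpha> \<in> D" and "b \<in> B" and "0 < representation B \<alpha> b"
  shows "\<alpha> \<in> pos_roots D B"
proof (rule ccontr)
  assume "\<alpha> \<notin> pos_roots D B"
  then have "- \<alpha> \<in> pos_roots D B"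
    using roots_signed_base assms(1) unfolding roots_signed_def by blast
  then have "0 \<le> representation B (- \<alpha>) b"
    by (rule representation_pos_root_nonneg[OF independent_base _ assms(2)])
  then show False
    using assms(3) representation_neg[OF independent_base root_in_span[OF assms(1)]] by simp
qed

lemma base_subset_pos_roots: "B \<subseteq> pos_roots D B"
proof
  fix b assume b: "b \<in> B"
  show "b \<in> pos_roots D B"
    by (rule pos_root_of_coeff_pos[OF _ b])
      (use b base_subset_roots representation_basis[OF independent_base b] in auto)
qed

lemma pos_root_coeff_nonneg: "\<alpha> \<in> pos_roots D B \<Longrightarrow> b \<in> B \<Longrightarrow> 0 \<le> representation B \<alpha> b"
  using representation_pos_root_nonneg[OF independent_base] .

text \<open>If \<open>\<sigma> \<bullet> \<theta> > 0\<close>, the reflection of \<open>\<sigma>\<close> in \<open>\<theta>\<close> is a root with coefficients of both signs.\<close>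
lemma inner_base_nonpos:
  assumes \<sigma>: "\<sigma> \<in> B" and \<theta>: "\<theta> \<in> B" and "\<sigma> \<noteq> \<theta>"
  shows "\<sigma> \<bullet> \<theta> \<le> 0"
proof (rule ccontr)
  assume "\<not> \<sigma> \<bullet> \<theta> \<le> 0"
  moreover have "\<theta> \<bullet> \<theta> > 0" using nonzero_root \<theta> base_subset_roots by auto
  ultimately have m: "2 * (\<sigma> \<bullet> \<theta>) / (\<theta> \<bullet> \<theta>) > 0" by simp
  define \<gamma> where "\<gamma> = \<sigma> - (2 * (\<sigma> \<bullet> \<theta>) / (\<theta> \<bullet> \<theta>)) *\<^sub>R \<theta>"
  have \<gamma>: "\<gamma> \<in> D" unfolding \<gamma>_def using reflection_in_roots \<sigma> \<theta> base_subset_roots by blast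
  have rep: "representation B \<gamma> b =
      representation B \<sigma> b - (2 * (\<sigma> \<bullet> \<theta>) / (\<theta> \<bullet> \<theta>)) * representation B \<theta> b" for b
    unfolding \<gamma>_def
    using representation_diff[OF independent_base span_mul[OF span_base[OF \<theta>]] span_base[OF \<sigma>]]
      representation_scale[OF independent_base span_base[OF \<theta>]] by simp
  have "0 < representation B \<gamma> \<sigma>"
    using rep[of \<sigma>] representation_basis[OF independent_base] \<sigma> \<theta> \<open>\<sigma> \<noteq> \<theta>\<close> by simp
  then have "\<gamma> \<in> pos_roots D B" by (rule pos_root_of_coeff_pos[OF \<gamma> \<sigma>])
  then have "0 \<le> representation B \<gamma> \<theta>" using pos_root_coeff_nonneg \<theta> by blast
  then show False
    using rep[of \<theta>] representation_basis[OF independent_base] \<sigma> \<theta> \<open>\<sigma> \<noteq> \<theta>\<close> m by simp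
qed

text \<open>Edges of the Dynkin graph of \<open>B\<close> that end in \<open>V\<close>: a path of \<open>dynkin_edge V\<close> has all
  its vertices except the first in \<open>V\<close>.\<close>
definition dynkin_edge :: "'a set \<Rightarrow> 'a \<Rightarrow> 'a \<Rightarrow> bool" where
  "dynkin_edge V x y \<longleftrightarrow> x \<in> B \<and> y \<in> B \<and> y \<in> V \<and> x \<bullet> y < 0"

lemma dynkin_path_mono:
  assumes "V \<subseteq> W" and "(dynkin_edge V)\<^sup>*\<^sup>* x y"
  shows "(dynkin_edge W)\<^sup>*\<^sup>* x y"
  using mono_rtranclp[of "dynkin_edge V" "dynkin_edge W"] assms
  unfolding dynkin_edge_def by blast

lemma dynkin_path_end: "(dynkin_edge V)\<^sup>*\<^sup>* x y \<Longrightarrow> y = x \<or> y \<in> B \<inter> V"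
  by (induction rule: rtranclp_induct) (auto simp: dynkin_edge_def)

lemma inner_unreachable_eq_0:
  assumes "(dynkin_edge V)\<^sup>*\<^sup>* \<sigma> c" and "\<sigma> \<in> B" and "d \<in> B" and "d \<in> V"
    and "\<not> (dynkin_edge V)\<^sup>*\<^sup>* \<sigma> d"
  shows "c \<bullet> d = 0"
proof -
  have "c \<in> B" using dynkin_path_end[OF assms(1)] assms(2) by auto
  have "c \<noteq> d" using assms(1,5) by auto
  have "\<not> c \<bullet> d < 0"
  proof
    assume "c \<bullet> d < 0"
    then have "dynkin_edge V c d" using \<open>c \<in> B\<close> assms(3,4) unfolding dynkin_edge_def by auto
    then show False using assms(1,5) by (meson rtranclp.rtrancl_into_rtrancl)
  qed
  then show ?thesis using inner_base_nonpos[OF \<open>c \<in> B\<close> assms(3) \<open>c \<noteq> d\<close>] by linarith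
qed

lemma inner_pos_root_neg:
  assumes \<alpha>: "\<alpha> \<in> pos_roots D B" and y: "y \<in> B" and z: "z \<in> B"
    and "0 < representation B \<alpha> y" and "y \<bullet> z < 0" and "representation B \<alpha> z = 0"
  shows "\<alpha> \<bullet> z < 0"
proof -
  have "\<alpha> = (\<Sum>b\<in>B. representation B \<alpha> b *\<^sub>R b)"
    using sum_representation_eq[OF independent_base _ finite_base] \<alpha> pos_roots_subset_span
    by (metis subset_iff subset_refl)
  then have "\<alpha> \<bullet> z = (\<Sum>b\<in>B. representation B \<alpha> b * (b \<bullet> z))"
    by (metis (no_types, lifting) inner_scaleR_left inner_sum_left sum.cong)
  also have "\<dots> = representation B \<alpha> y * (y \<bullet> z) + (\<Sum>b\<in>B - {y}. representation B \<alpha> b * (b \<bullet> z))"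
    by (rule sum.remove[OF finite_base y])
  also have "\<dots> < 0"
  proof -
    have "representation B \<alpha> y * (y \<bullet> z) < 0"
      using assms(4,5) by (simp add: mult_pos_neg)
    moreover have "(\<Sum>b\<in>B - {y}. representation B \<alpha> b * (b \<bullet> z)) \<le> 0"
    proof (rule sum_nonpos)
      fix b assume b: "b \<in> B - {y}"
      show "representation B \<alpha> b * (b \<bullet> z) \<le> 0"
      proof (cases "b = z")
        case False
        then have "b \<bullet> z \<le> 0" using inner_base_nonpos b z by blast
        then show ?thesis
          using pos_root_coeff_nonneg[OF \<alpha>] b by (simp add: mult_nonneg_nonpos)
      qed (use assms(6) in simp)
    qed
    ultimately show ?thesis by linarith
  qed
  finally show ?thesis .
qed

lemma reflection_extends_support:
  assumes \<alpha>: "\<alpha> \<in> pos_roots D B" and y: "y \<in> B" and z: "z \<in> B"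
    and "0 < representation B \<alpha> y" and "y \<bullet> z < 0" and "representation B \<alpha> z = 0"
  shows "\<exists>k>0. \<alpha> + k *\<^sub>R z \<in> pos_roots D B \<and> 0 < representation B (\<alpha> + k *\<^sub>R z) z"
proof -
  have \<alpha>D: "\<alpha> \<in> D" using \<alpha> pos_roots_subset by blast
  have zD: "z \<in> D" using z base_subset_roots by blast
  define k where "k = - (2 * (\<alpha> \<bullet> z) / (z \<bullet> z))"
  have "z \<bullet> z > 0" using nonzero_root[OF zD] by simp
  then have "k > 0"
    unfolding k_def using inner_pos_root_neg[OF assms] by (simp add: divide_neg_pos)
  have "\<alpha> + k *\<^sub>R z \<in> D"
    using reflection_in_roots[OF zD \<alpha>D] unfolding k_def by simp
  have rep: "representation B (\<alpha> + k *\<^sub>R z) b = representation B \<alpha> b + k * (if b = z then 1 else 0)"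
    for b
    using representation_add[OF independent_base span_mul[OF span_base[OF z]] root_in_span[OF \<alpha>D],
        of k]
      representation_scale[OF independent_base span_base[OF z], of k]
      representation_basis[OF independent_base z] by simp
  have "y \<noteq> z" using \<open>y \<bullet> z < 0\<close> by (metis inner_ge_zero not_le)
  then have "0 < representation B (\<alpha> + k *\<^sub>R z) y" using rep[of y] assms(4) by simp
  then have "\<alpha> + k *\<^sub>R z \<in> pos_roots D B"
    by (rule pos_root_of_coeff_pos[OF \<open>\<alpha> + k *\<^sub>R z \<in> D\<close> y])
  moreover have "0 < representation B (\<alpha> + k *\<^sub>R z) z" using rep[of z] assms(6) \<open>k > 0\<close> by simp
  ultimately show ?thesis using \<open>k > 0\<close> by blast
qed

lemma raise_along_path:
  assumes "(dynkin_edge V)\<^sup>*\<^sup>* x y"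
    and "\<alpha> \<in> pos_roots D B" and "0 < representation B \<alpha> x"
  shows "\<exists>\<alpha>'\<in>pos_roots D B. \<alpha>' - \<alpha> \<in> span V \<and> 0 < representation B \<alpha>' y"
  using assms(1)
proof (induction rule: rtranclp_induct)
  case base
  then show ?case using assms(2,3) by (intro bexI[of _ \<alpha>]) (auto simp: span_zero)
next
  case (step y z)
  then obtain \<alpha>1 where \<alpha>1: "\<alpha>1 \<in> pos_roots D B" "\<alpha>1 - \<alpha> \<in> span V" "0 < representation B \<alpha>1 y"
    by blast
  have y: "y \<in> B" and z: "z \<in> B" "z \<in> V" and "y \<bullet> z < 0"
    using step(2) unfolding dynkin_edge_def by auto
  show ?case
  proof (cases "0 < representation B \<alpha>1 z")
    case True
    then show ?thesis using \<alpha>1 by blast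
  next
    case False
    then have "representation B \<alpha>1 z = 0"
      using pos_root_coeff_nonneg[OF \<alpha>1(1) z(1)] by simp
    then obtain k where k: "\<alpha>1 + k *\<^sub>R z \<in> pos_roots D B" "0 < representation B (\<alpha>1 + k *\<^sub>R z) z"
      using reflection_extends_support[OF \<alpha>1(1) y z(1) \<alpha>1(3) \<open>y \<bullet> z < 0\<close>] by blast
    have "(\<alpha>1 + k *\<^sub>R z) - \<alpha> = (\<alpha>1 - \<alpha>) + k *\<^sub>R z" by simp
    then have "(\<alpha>1 + k *\<^sub>R z) - \<alpha> \<in> span V"
      using \<alpha>1(2) span_add span_mul span_base[OF z(2)] by metis
    then show ?thesis using k by blast
  qed
qed

lemma dynkin_path_exit:
  assumes "(dynkin_edge B)\<^sup>*\<^sup>* a c" and "a \<in> B" and "a \<notin> V"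
  shows "\<exists>\<tau>\<in>B - V. (dynkin_edge V)\<^sup>*\<^sup>* \<tau> c"
  using assms
proof (induction rule: rtranclp_induct)
  case base
  then show ?case by blast
next
  case (step b c)
  then obtain \<tau> where \<tau>: "\<tau> \<in> B - V" "(dynkin_edge V)\<^sup>*\<^sup>* \<tau> b" by blast
  show ?case
  proof (cases "c \<in> V")
    case True
    then have "dynkin_edge V b c" using step(2) unfolding dynkin_edge_def by auto
    then show ?thesis using \<tau> by (meson rtranclp.rtrancl_into_rtrancl)
  next
    case False
    then show ?thesis using step(2) unfolding dynkin_edge_def by auto
  qed
qed

end

section \<open>Quotients of a root system\<close>

locale qrs_presentation = based_root_system +
  fixes J :: "'a set"
  assumes proper_subset: "J \<subset> B"
begin

abbreviation P :: "'a \<Rightarrow> 'a" where "P \<equiv> perp_proj J"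

lemma J_subset_base: "J \<subseteq> B"
  using proper_subset by blast

lemma independent_quotient_base: "independent (quot_base B J)"
  using independent_quot_base[OF independent_base J_subset_base] .

lemma roots_signed_quotient: "roots_signed (quot_roots D J) (quot_base B J)"
  using roots_signed_quot[OF roots_signed_base independent_base J_subset_base] .

lemma pos_roots_quotient: "pos_roots (quot_roots D J) (quot_base B J) = quot_pos D B J"
  using pos_roots_quot[OF roots_signed_base independent_base J_subset_base] .

lemma quotient_base_subset_pos_roots: "quot_base B J \<subseteq> pos_roots (quot_roots D J) (quot_base B J)"
  using quot_base_subset_quot_pos[OF independent_base J_subset_base base_subset_pos_roots]
  unfolding pos_roots_quotient .

text \<open>If no such path exists, the simple roots reachable from \<open>\<sigma>\<close> inside \<open>J\<close> are orthogonal to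
  \<open>\<theta>\<close> and to the rest of \<open>J\<close>, so projecting away \<open>J\<close> leaves \<open>P \<sigma>\<close> orthogonal to \<open>\<theta>\<close>.\<close>
lemma dynkin_path_of_inner_neg:
  assumes \<sigma>: "\<sigma> \<in> B - J" and \<theta>: "\<theta> \<in> B - J" and neg: "P \<sigma> \<bullet> P \<theta> < 0"
  shows "(dynkin_edge (insert \<theta> J))\<^sup>*\<^sup>* \<sigma> \<theta>"
proof (rule ccontr)
  assume no_path: "\<not> ?thesis"
  define C where "C = {j \<in> J. (dynkin_edge J)\<^sup>*\<^sup>* \<sigma> j}"
  have orth_J: "c \<bullet> j = 0" if "(dynkin_edge J)\<^sup>*\<^sup>* \<sigma> c" and "j \<in> J - C" for c j
    using inner_unreachable_eq_0[OF that(1)] \<sigma> that(2) J_subset_base unfolding C_def by blast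
  have orth_\<theta>: "c \<bullet> \<theta> = 0" if "(dynkin_edge J)\<^sup>*\<^sup>* \<sigma> c" for c
    using inner_unreachable_eq_0[OF dynkin_path_mono[OF subset_insertI that]] \<sigma> \<theta> no_path by blast
  have P\<sigma>: "P \<sigma> = perp_proj C \<sigma>"
  proof (rule perp_proj_eq_perp_proj_subset)
    show "C \<subseteq> J" unfolding C_def by blast
    show "c \<bullet> k = 0" if "c \<in> C" "k \<in> J - C" for c k
      using orth_J that unfolding C_def by blast
    show "\<sigma> \<bullet> k = 0" if "k \<in> J - C" for k
      using orth_J[OF rtranclp.rtrancl_refl that] .
  qed
  have "orthogonal \<theta> (\<sigma> - perp_proj C \<sigma>)"
    by (rule orthogonal_to_span[OF perp_proj_diff_in_span])
      (use orth_\<theta> in \<open>auto simp: C_def orthogonal_def inner_commute\<close>)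
  have "P \<sigma> \<bullet> P \<theta> = P \<sigma> \<bullet> \<theta>"
    using perp_proj_orthogonal_span[OF perp_proj_diff_in_span[of \<theta> J], of \<sigma>]
    by (simp add: inner_diff_right)
  also have "\<dots> = \<sigma> \<bullet> \<theta> - (\<sigma> - perp_proj C \<sigma>) \<bullet> \<theta>"
    unfolding P\<sigma> by (simp add: inner_diff_left)
  also have "\<dots> = 0"
    using orth_\<theta>[OF rtranclp.rtrancl_refl] \<open>orthogonal \<theta> (\<sigma> - perp_proj C \<sigma>)\<close>
    by (simp add: orthogonal_def inner_commute)
  finally show False using neg by simp
qed

lemma dynkin_path_of_connected:
  assumes conn: "connected_base (quot_base B J)" and s: "s \<in> B - J" and t: "t \<in> B - J"
  shows "(dynkin_edge B)\<^sup>*\<^sup>* s t"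
proof -
  let ?edge = "\<lambda>x y. x \<in> quot_base B J \<and> y \<in> quot_base B J \<and> x \<bullet> y < 0"
  have "?edge\<^sup>*\<^sup>* (P s) (P t)"
    using conn s t unfolding connected_base_def quot_base_def by auto
  moreover have "\<forall>t'\<in>B - J. P t' = y \<longrightarrow> (dynkin_edge B)\<^sup>*\<^sup>* s t'" if "?edge\<^sup>*\<^sup>* (P s) y" for y
    using that
  proof (induction rule: rtranclp_induct)
    case base
    then show ?case
      using inj_on_perp_proj[OF independent_base J_subset_base] s by (auto dest: inj_onD)
  next
    case (step y z)
    obtain t1 where t1: "t1 \<in> B - J" "P t1 = y"
      using step(2) unfolding quot_base_def by auto
    show ?case
    proof (intro ballI impI)
      fix t' assume t': "t' \<in> B - J" "P t' = z"
      have "(dynkin_edge (insert t' J))\<^sup>*\<^sup>* t1 t'"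
        using dynkin_path_of_inner_neg[OF t1(1) t'(1)] step(2) t1 t' by auto
      then have "(dynkin_edge B)\<^sup>*\<^sup>* t1 t'"
        using dynkin_path_mono[of "insert t' J" B] t'(1) J_subset_base by blast
      moreover have "(dynkin_edge B)\<^sup>*\<^sup>* s t1" using step(3) t1 by blast
      ultimately show "(dynkin_edge B)\<^sup>*\<^sup>* s t'" by (rule rtranclp_trans[rotated])
    qed
  qed
  ultimately show ?thesis using t by blast
qed

lemma perp_proj_eq_if_diff_in_span_preimage:
  assumes "u - v \<in> span (J \<union> {b \<in> B - J. P b \<in> I})"
  shows "perp_proj I (P u) = perp_proj I (P v)"
proof -
  have "P ` (J \<union> {b \<in> B - J. P b \<in> I}) \<subseteq> insert 0 I"
    by (auto simp: perp_proj_eq_0_iff span_base)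
  then have "span (P ` (J \<union> {b \<in> B - J. P b \<in> I})) \<subseteq> span I"
    by (metis span_insert_0 span_mono)
  moreover have "P (u - v) \<in> span (P ` (J \<union> {b \<in> B - J. P b \<in> I}))"
    using linear_span_image[OF linear_perp_proj] assms by blast
  ultimately have "P u - P v \<in> span I"
    using linear_diff[OF linear_perp_proj, of J u v] by auto
  then have "perp_proj I (P u - P v) = 0" by (simp only: perp_proj_eq_0_iff)
  then show ?thesis using linear_diff[OF linear_perp_proj, of I "P u" "P v"] by simp
qed

lemma perp_proj_pos_root:
  assumes \<alpha>: "\<alpha> \<in> pos_roots D B" and b: "b \<in> B - J" and "0 < representation B \<alpha> b"
  shows "P \<alpha> \<in> pos_roots (quot_roots D J) (quot_base B J)"
    and "P b \<in> supp_root (quot_base B J) (P \<alpha>)"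
proof -
  show supp: "P b \<in> supp_root (quot_base B J) (P \<alpha>)"
    using perp_proj_in_supp_root_iff[OF independent_base J_subset_base _ b] \<alpha> assms(3) b
      pos_roots_subset_span unfolding supp_root_def by force
  then have "P \<alpha> \<noteq> 0" using supp_root_zero by force
  then show "P \<alpha> \<in> pos_roots (quot_roots D J) (quot_base B J)"
    using quot_posI[OF \<alpha>, of J] unfolding pos_roots_quotient by blast
qed

lemma pos_root_lift:
  assumes x: "x \<in> pos_roots (quot_roots D J) (quot_base B J)" and b: "b \<in> B - J"
    and "P b \<in> supp_root (quot_base B J) x"
  obtains \<alpha> where "\<alpha> \<in> pos_roots D B" and "P \<alpha> = x" and "0 < representation B \<alpha> b"
proof -
  obtain \<alpha> where \<alpha>: "\<alpha> \<in> pos_roots D B" "x = P \<alpha>"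
    using x unfolding pos_roots_quotient quot_pos_def by auto
  have "representation B \<alpha> b \<noteq> 0"
    using assms(3) perp_proj_in_supp_root_iff[OF independent_base J_subset_base _ b] \<alpha>
      pos_roots_subset_span b unfolding supp_root_def by force
  then have "0 < representation B \<alpha> b"
    using pos_root_coeff_nonneg[OF \<alpha>(1)] b by force
  then show ?thesis using that \<alpha> by blast
qed

text \<open>Take a Dynkin path to (the preimage of) \<open>\<theta>\<close> from its last vertex \<open>\<tau>\<close> outside \<open>J\<close> and
  the preimage of \<open>I\<close>. A root over \<open>G\<close> containing \<open>P \<tau>\<close> lifts to \<open>\<Delta>\<close>, and reflecting it along
  the path only adds simple roots that vanish modulo \<open>span I\<close>.\<close>
lemma exists_pos_root_supp:
  assumes conn: "connected_base (quot_base B J)" and I: "I \<subset> quot_base B J"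
    and G: "G \<subseteq> quot_pos (quot_roots D J) (quot_base B J) I"
    and full: "supp_set (quot_base (quot_base B J) I) G = quot_base (quot_base B J) I"
    and \<theta>: "\<theta> \<in> quot_base B J"
  shows "\<exists>x\<in>pos_roots (quot_roots D J) (quot_base B J).
    perp_proj I x \<in> G \<and> \<theta> \<in> supp_root (quot_base B J) x"
proof -
  let ?S = "quot_base B J"
  define V where "V = J \<union> {b \<in> B - J. P b \<in> I}"
  obtain t where t: "t \<in> B - J" "P t = \<theta>" using \<theta> unfolding quot_base_def by auto
  obtain t0 where t0: "t0 \<in> B - J" "P t0 \<notin> I" using I unfolding quot_base_def by auto
  have "t0 \<notin> V" using t0 unfolding V_def by auto
  then obtain \<tau> where \<tau>: "\<tau> \<in> B - V" "(dynkin_edge V)\<^sup>*\<^sup>* \<tau> t"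
    using dynkin_path_exit[OF dynkin_path_of_connected[OF conn t0(1) t(1)]] t0(1) by blast
  then have \<tau>J: "\<tau> \<in> B - J" and "P \<tau> \<in> ?S - I" unfolding V_def quot_base_def by auto
  then obtain x where x: "x \<in> pos_roots (quot_roots D J) ?S" "perp_proj I x \<in> G"
    "P \<tau> \<in> supp_root ?S x"
    using exists_pos_root_supp_quot[OF independent_quotient_base _ G full] I by blast
  then obtain \<alpha> where \<alpha>: "\<alpha> \<in> pos_roots D B" "P \<alpha> = x" "0 < representation B \<alpha> \<tau>"
    using pos_root_lift \<tau>J by blast
  then obtain \<alpha>' where \<alpha>': "\<alpha>' \<in> pos_roots D B" "\<alpha>' - \<alpha> \<in> span V" "0 < representation B \<alpha>' t"
    using raise_along_path[OF \<tau>(2)] by blast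
  have "perp_proj I (P \<alpha>') = perp_proj I x"
    using perp_proj_eq_if_diff_in_span_preimage \<alpha>(2) \<alpha>'(2) unfolding V_def by blast
  then show ?thesis using perp_proj_pos_root[OF \<alpha>'(1) t(1) \<alpha>'(3)] t(2) x(2) by metis
qed

end

lemma is_QRS_presentation:
  assumes "is_QRS R S"
  obtains D B J where "qrs_presentation D B J" and "R = quot_roots D J" and "S = quot_base B J"
  using assms unfolding is_QRS_def qrs_presentation_def qrs_presentation_axioms_def
    based_root_system_def quot_roots_def quot_base_def by blast

lemma is_QRS_independent: "is_QRS R S \<Longrightarrow> independent S"
  by (metis is_QRS_presentation qrs_presentation.independent_quotient_base)

lemma is_QRS_roots_signed: "is_QRS R S \<Longrightarrow> roots_signed R S"
  by (metis is_QRS_presentation qrs_presentation.roots_signed_quotient)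

lemma is_QRS_base_subset_pos_roots: "is_QRS R S \<Longrightarrow> S \<subseteq> pos_roots R S"
  by (metis is_QRS_presentation qrs_presentation.quotient_base_subset_pos_roots)

lemma supp_set_inflation_eq_iff:
  assumes "is_QRS R S" and conn: "connected_base S" and I: "I \<subset> S"
    and \<Psi>: "\<Psi> \<subseteq> quot_pos R S I" and X: "X \<subseteq> sub_pos R S I"
  shows "supp_set S (inflation R S I \<Psi> X) = S \<longleftrightarrow> supp_set (quot_base S I) \<Psi> = quot_base S I"
proof
  assume "supp_set S (inflation R S I \<Psi> X) = S"
  then show "supp_set (quot_base S I) \<Psi> = quot_base S I"
    using supp_set_quot_full_if_inflation_full[OF is_QRS_independent[OF assms(1)] _ X] I by blast
next
  assume full: "supp_set (quot_base S I) \<Psi> = quot_base S I"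
  obtain D B J where qrs: "qrs_presentation D B J"
    and R: "R = quot_roots D J" and S: "S = quot_base B J"
    using is_QRS_presentation[OF assms(1)] .
  have "\<exists>x\<in>pos_roots R S. perp_proj I x \<in> \<Psi> \<and> \<theta> \<in> supp_root S x" if "\<theta> \<in> S" for \<theta>
    using qrs_presentation.exists_pos_root_supp[OF qrs, of I \<Psi> \<theta>] conn I \<Psi> full that
    unfolding R S by blast
  then have "S \<subseteq> supp_set S (inflation R S I \<Psi> X)"
    unfolding supp_set_def inflation_def by blast
  then show "supp_set S (inflation R S I \<Psi> X) = S"
    using supp_set_subset by blast
qed

theorem proposition3p18:
  fixes R S \<Phi> I \<Psi> X :: "'a::euclidean_space set"
  assumes "is_QRS R S"
    and "connected_base S"
    and "\<Phi> \<subseteq> pos_roots R S"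
    and "canonical_form R S \<Phi> I \<Psi> X"
  shows "(primitive (quot_roots R I) (quot_base S I) \<Psi> \<longleftrightarrow>
            supp_set S \<Phi> = S \<and> supp_set S (pos_roots R S - \<Phi>) = S)
       \<and> (\<Psi> = {} \<longleftrightarrow> supp_set S \<Phi> \<subset> S \<and> supp_set S (pos_roots R S - \<Phi>) = S)
       \<and> (\<Psi> = quot_pos R S I \<longleftrightarrow> supp_set S (pos_roots R S - \<Phi>) \<subset> S \<and> supp_set S \<Phi> = S)"
proof -
  let ?QP = "quot_pos R S I" and ?S' = "quot_base S I"
  let ?prim = "primitive (quot_roots R I) ?S' \<Psi>"
  have I: "I \<subset> S" and \<Psi>: "\<Psi> \<subseteq> ?QP" and X: "X \<subseteq> sub_pos R S I"
    and \<Phi>: "\<Phi> = inflation R S I \<Psi> X" and cases: "?prim \<or> \<Psi> = {} \<or> \<Psi> = ?QP"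
    using assms(4) unfolding canonical_form_def by auto
  have ind: "independent S" and ind': "independent ?S'"
    using is_QRS_independent[OF assms(1)] independent_quot_base I by blast+
  have supp_\<Phi>: "supp_set S \<Phi> = S \<longleftrightarrow> supp_set ?S' \<Psi> = ?S'"
    unfolding \<Phi> by (rule supp_set_inflation_eq_iff[OF assms(1,2) I \<Psi> X])
  have supp_\<Phi>c: "supp_set S (pos_roots R S - \<Phi>) = S \<longleftrightarrow> supp_set ?S' (?QP - \<Psi>) = ?S'"
    unfolding \<Phi> pos_roots_diff_inflation[OF \<Psi> X]
    by (rule supp_set_inflation_eq_iff[OF assms(1,2) I]) auto
  have "supp_set ?S' ?QP = ?S'"
    using supp_set_eq_base[OF ind' quot_base_subset_quot_pos[OF ind _ is_QRS_base_subset_pos_roots]]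
      assms(1) I by blast
  moreover have "?S' \<noteq> {}" using I unfolding quot_base_def by blast
  moreover have "supp_set ?S' \<Psi> = ?S' \<and> supp_set ?S' (?QP - \<Psi>) = ?S' \<and> \<Psi> \<noteq> {} \<and> \<Psi> \<noteq> ?QP"
    if ?prim
    using primitive_supp_set[OF ind' _ that] that \<Psi>
      pos_roots_quot[OF is_QRS_roots_signed[OF assms(1)] ind] I
    unfolding primitive_def quot_roots_def by auto
  moreover have "supp_set S A \<subset> S \<longleftrightarrow> supp_set S A \<noteq> S" for A
    using supp_set_subset by blast
  ultimately show ?thesis using cases supp_\<Phi> supp_\<Phi>c by auto
qed

end
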